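(* Let $\mathbb{K}$ be a field of characteristic zero, let $p,q\in\mathbb{Z}^n_{\ge0}$ be nonzero vectors and let $\beta,\gamma\in\mathbb{K}^n$ be nonzero, non-proportional vectors. Suppose $\langle\beta,q\rangle=0$ and let $r\in\mathbb{Z}_{\ge0}$ be the smallest number such that $\langle\gamma,p+rq\rangle=0$. Then the Lie algebra $\mathfrak{g}(\Delta^q_\gamma,\Delta^p_\beta)$ generated by $\Delta^q_\gamma$ and $\Delta^p_\beta$ has dimension $r+2$ and is $(r+1)$-step nilpotent; moreover, the derivations $\Delta^q_\gamma,\Delta^p_\beta,\Delta^{p+q}_\beta,\ldots,\Delta^{p+rq}_\beta$ form a basis of this Lie algebra.
   Context: For $p\in\mathbb{Z}^n_{\ge0}$ and $\beta\in\mathbb{K}^n$, $\Delta^p_\beta:=x_1^{p_1}\cdots x_n^{p_n}\sum_{j=1}^n\beta_jx_j\partial_j$ (a derivation of $\mathbb{K}[x_1,\ldots,x_n]$, $\partial_j=\partial/\partial x_j$). $\langle\beta,u\rangle:=\sum_i\beta_iu_i$. The Lie bracket is the commutator of derivations. *)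

theory Defs
  imports Complex_Main "HOL-Library.Poly_Mapping" "HOL-Library.Function_Algebras"
begin

text \<open>Polynomials in the variables x_i (i ranging over the finite type 'n, so n = CARD('n))
  with coefficients in 'a: finitely supported maps from exponent vectors ('n => nat) to 'a.\<close>
type_synonym ('n, 'a) kpoly = "('n \<Rightarrow> nat) \<Rightarrow>\<^sub>0 'a"

type_synonym ('n, 'a) kop = "('n, 'a) kpoly \<Rightarrow> ('n, 'a) kpoly"

definition pscale :: "'a::field \<Rightarrow> ('n, 'a) kpoly \<Rightarrow> ('n, 'a) kpoly" where
  "pscale c f = Poly_Mapping.map (\<lambda>v. c * v) f"

definition xmon :: "('n \<Rightarrow> nat) \<Rightarrow> ('n, 'a::field) kpoly" where
  "xmon u = Poly_Mapping.single u 1"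

definition xvar :: "'n \<Rightarrow> ('n, 'a::field) kpoly" where
  "xvar j = xmon (\<lambda>i. if i = j then 1 else 0)"

definition pdiff :: "'n \<Rightarrow> ('n, 'a::field) kpoly \<Rightarrow> ('n, 'a) kpoly" where
  "pdiff j f = (\<Sum>m\<in>Poly_Mapping.keys f.
      Poly_Mapping.single (\<lambda>i. if i = j then m i - 1 else m i) (of_nat (m j) * Poly_Mapping.lookup f m))"

definition Delta :: "('n::finite \<Rightarrow> nat) \<Rightarrow> ('n \<Rightarrow> 'a::field) \<Rightarrow> ('n, 'a) kop" where
  "Delta p \<beta> f = xmon p * (\<Sum>j\<in>UNIV. pscale (\<beta> j) (xvar j * pdiff j f))"

definition pair :: "('n::finite \<Rightarrow> 'a::field) \<Rightarrow> ('n \<Rightarrow> nat) \<Rightarrow> 'a" where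
  "pair \<beta> u = (\<Sum>i\<in>UNIV. \<beta> i * of_nat (u i))"

definition lie :: "('n, 'a::field) kop \<Rightarrow> ('n, 'a) kop \<Rightarrow> ('n, 'a) kop" where
  "lie D E = (\<lambda>f. D (E f) - E (D f))"

definition oscale :: "'a::field \<Rightarrow> ('n, 'a) kop \<Rightarrow> ('n, 'a) kop" where
  "oscale c D = (\<lambda>f. pscale c (D f))"

inductive_set lie_gen :: "('n, 'a::field) kop set \<Rightarrow> ('n, 'a) kop set" for S where
  gen: "D \<in> S \<Longrightarrow> D \<in> lie_gen S"
| zero: "0 \<in> lie_gen S"
| add: "D \<in> lie_gen S \<Longrightarrow> E \<in> lie_gen S \<Longrightarrow> D + E \<in> lie_gen S"
| scale: "D \<in> lie_gen S \<Longrightarrow> oscale c D \<in> lie_gen S"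
| bracket: "D \<in> lie_gen S \<Longrightarrow> E \<in> lie_gen S \<Longrightarrow> lie D E \<in> lie_gen S"

text \<open>Lower central series: lcs g 0 = g (= g^1), lcs g (k+1) = span [g, lcs g k] (= g^(k+2)).\<close>
fun lcs :: "('n, 'a::field) kop set \<Rightarrow> nat \<Rightarrow> ('n, 'a) kop set" where
  "lcs g 0 = g"
| "lcs g (Suc k) = module.span oscale {lie D E | D E. D \<in> g \<and> E \<in> lcs g k}"

definition step_nilpotent :: "('n, 'a::field) kop set \<Rightarrow> nat \<Rightarrow> bool" where
  "step_nilpotent g s \<longleftrightarrow> s \<ge> 1 \<and> lcs g s = {0} \<and> lcs g (s - 1) \<noteq> {0}"

end

theory Submission
  imports Defs
begin

(* On monomials, Delta^a_alpha is the weighted shift x^m |-> <alpha,m> x^(a+m). Composing weighted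
   shifts gives [Delta^a_alpha, Delta^b_beta] = Delta^(a+b)_(<alpha,b> beta - <beta,a> alpha); since
   <beta,q> = 0, this yields [Delta^q_gamma, Delta^(p+kq)_beta] = <gamma,p+kq> Delta^(p+(k+1)q)_beta
   and [Delta^(p+jq)_beta, Delta^(p+kq)_beta] = 0. As <gamma,p+kq> is nonzero exactly for k < r,
   the algebra generated by Delta^q_gamma and Delta^p_beta is spanned by Delta^q_gamma and
   Delta^(p+kq)_beta for k = 0..r, and its lower central series loses Delta^(p+kq)_beta at step k+1.
   Linear independence comes from the coefficient of x^a x_i in D x_i, which on Delta^b_alpha equals
   alpha_i if b = a and 0 otherwise. *)

section \<open>Linear operators and their commutators\<close>

lemma lookup_pscale [simp]: "Poly_Mapping.lookup (pscale c f) k = c * Poly_Mapping.lookup f k"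
  unfolding pscale_def by transfer (simp add: when_def)

interpretation poly: vector_space "pscale :: 'a::field \<Rightarrow> ('n, 'a) kpoly \<Rightarrow> ('n, 'a) kpoly"
  by unfold_locales (simp_all add: poly_mapping_eqI lookup_add algebra_simps)

interpretation ops: vector_space "oscale :: 'a::field \<Rightarrow> ('n, 'a) kop \<Rightarrow> ('n, 'a) kop"
  by unfold_locales (simp_all add: oscale_def fun_eq_iff poly.scale_right_distrib poly.scale_left_distrib)

interpretation poly_pair: vector_space_pair "pscale :: 'a::field \<Rightarrow> ('n, 'a) kpoly \<Rightarrow> _" pscale ..

abbreviation linear_op :: "('n, 'a::field) kop \<Rightarrow> bool" where
  "linear_op \<equiv> Vector_Spaces.linear pscale pscale"

lemma linear_opI:
  "(\<And>f g. D (f + g) = D f + D g) \<Longrightarrow> (\<And>c f. D (pscale c f) = pscale c (D f)) \<Longrightarrow> linear_op D"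
  by (simp add: Vector_Spaces.linear_iff poly.vector_space_axioms)

lemma linear_op_0: "linear_op 0"
  by (simp add: zero_fun_def poly_pair.linear_zero)

lemma linear_op_add: "linear_op D \<Longrightarrow> linear_op E \<Longrightarrow> linear_op (D + E)"
  by (simp add: plus_fun_def poly_pair.linear_compose_add)

lemma linear_op_oscale: "linear_op D \<Longrightarrow> linear_op (oscale c D)"
  by (simp add: oscale_def poly_pair.linear_compose_scale_right)

lemma linear_op_subspace: "ops.subspace {D. linear_op D}"
  by (simp add: ops.subspace_def linear_op_0 linear_op_add linear_op_oscale)

lemma linear_op_span: "X \<subseteq> Collect linear_op \<Longrightarrow> D \<in> ops.span X \<Longrightarrow> linear_op D"
  using ops.span_minimal[OF _ linear_op_subspace] by blast

lemma lie_self: "lie D D = 0"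
  by (simp add: lie_def fun_eq_iff)

lemma lie_antisym: "lie E D = - lie D E"
  by (simp add: lie_def fun_eq_iff)

lemma lie_add_left: "linear_op E \<Longrightarrow> lie (D + D') E = lie D E + lie D' E"
  by (simp add: lie_def fun_eq_iff poly_pair.linear_add)

lemma lie_add_right: "linear_op D \<Longrightarrow> lie D (E + E') = lie D E + lie D E'"
  by (simp add: lie_def fun_eq_iff poly_pair.linear_add)

lemma lie_scale_left: "linear_op E \<Longrightarrow> lie (oscale c D) E = oscale c (lie D E)"
  by (simp add: lie_def oscale_def fun_eq_iff poly_pair.linear_scale poly.scale_right_diff_distrib)

lemma lie_scale_right: "linear_op D \<Longrightarrow> lie D (oscale c E) = oscale c (lie D E)"
  by (simp add: lie_def oscale_def fun_eq_iff poly_pair.linear_scale poly.scale_right_diff_distrib)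

lemma lie_zero_left: "linear_op E \<Longrightarrow> lie 0 E = 0"
  by (simp add: lie_def fun_eq_iff poly_pair.linear_0)

lemma lie_zero_right: "linear_op D \<Longrightarrow> lie D 0 = 0"
  by (simp add: lie_def fun_eq_iff poly_pair.linear_0)

lemma lie_span_span_mem:
  assumes X: "X \<subseteq> Collect linear_op" and Y: "Y \<subseteq> Collect linear_op" and W: "ops.subspace W"
    and XY: "\<And>x y. x \<in> X \<Longrightarrow> y \<in> Y \<Longrightarrow> lie x y \<in> W"
    and D: "D \<in> ops.span X" and E: "E \<in> ops.span Y"
  shows "lie D E \<in> W"
proof -
  have right: "lie x E \<in> W" if x: "x \<in> X" for x
  proof -
    have "linear_op x" using X x by blast
    then have "ops.subspace {E. linear_op E \<and> lie x E \<in> W}"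
      by (simp add: ops.subspace_def linear_op_0 linear_op_add linear_op_oscale
          lie_add_right lie_scale_right lie_zero_right
          ops.subspace_0[OF W] ops.subspace_add[OF W] ops.subspace_scale[OF W])
    then have "E \<in> {E. linear_op E \<and> lie x E \<in> W}"
      by (rule ops.span_subspace_induct[OF E]) (use XY Y x in auto)
    then show ?thesis by simp
  qed
  have "linear_op E" using linear_op_span[OF Y E] .
  then have "ops.subspace {D. linear_op D \<and> lie D E \<in> W}"
    by (simp add: ops.subspace_def linear_op_0 linear_op_add linear_op_oscale
        lie_add_left lie_scale_left lie_zero_left
        ops.subspace_0[OF W] ops.subspace_add[OF W] ops.subspace_scale[OF W])
  then have "D \<in> {D. linear_op D \<and> lie D E \<in> W}"
    by (rule ops.span_subspace_induct[OF D]) (use right X in auto)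
  then show ?thesis by simp
qed

lemma span_lie_span:
  assumes "X \<subseteq> Collect linear_op" and "Y \<subseteq> Collect linear_op"
  shows "ops.span {lie D E | D E. D \<in> ops.span X \<and> E \<in> ops.span Y}
    = ops.span {lie x y | x y. x \<in> X \<and> y \<in> Y}" (is "ops.span ?L = ops.span ?R")
proof
  have "?L \<subseteq> ops.span ?R"
  proof
    fix L assume "L \<in> ?L"
    then obtain D E where "L = lie D E" "D \<in> ops.span X" "E \<in> ops.span Y" by blast
    moreover have "lie x y \<in> ops.span ?R" if "x \<in> X" "y \<in> Y" for x y
      using that by (intro ops.span_base) blast
    ultimately show "L \<in> ops.span ?R"
      using lie_span_span_mem[OF assms ops.subspace_span] by blast
  qed
  then show "ops.span ?L \<subseteq> ops.span ?R"
    by (rule ops.span_minimal[OF _ ops.subspace_span])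
  have "?R \<subseteq> ?L"
    using ops.span_base by blast
  then show "ops.span ?R \<subseteq> ops.span ?L"
    by (rule ops.span_mono)
qed

lemma lie_gen_eq_span:
  assumes "S \<subseteq> B" and "B \<subseteq> lie_gen S" and "B \<subseteq> Collect linear_op"
    and "\<And>x y. x \<in> B \<Longrightarrow> y \<in> B \<Longrightarrow> lie x y \<in> ops.span B"
  shows "lie_gen S = ops.span B"
proof
  show "lie_gen S \<subseteq> ops.span B"
  proof
    fix D assume "D \<in> lie_gen S"
    then show "D \<in> ops.span B"
    proof induction
      case (gen D)
      then show ?case using assms(1) by (auto intro: ops.span_base)
    next
      case zero
      show ?case by (rule ops.span_zero)
    next
      case (add D E)
      show ?case by (rule ops.span_add[OF add.IH])
    next
      case (scale D c)
      show ?case by (rule ops.span_scale[OF scale.IH])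
    next
      case (bracket D E)
      then show ?case using lie_span_span_mem[OF assms(3,3) ops.subspace_span assms(4)] by blast
    qed
  qed
  have "ops.subspace (lie_gen S)"
    by (simp add: ops.subspace_def lie_gen.zero lie_gen.add lie_gen.scale)
  then show "ops.span B \<subseteq> lie_gen S"
    using assms(2) by (rule ops.span_minimal[rotated])
qed

section \<open>Weighted shift operators\<close>

definition weighted_shift :: "('n \<Rightarrow> nat) \<Rightarrow> (('n \<Rightarrow> nat) \<Rightarrow> 'a::field) \<Rightarrow> ('n, 'a) kop" where
  "weighted_shift a \<phi> f =
     (\<Sum>m\<in>Poly_Mapping.keys f. Poly_Mapping.single (a + m) (\<phi> m * Poly_Mapping.lookup f m))"

lemma add_eq_iff_le_diff: "(a :: 'n \<Rightarrow> nat) + m = k \<longleftrightarrow> a \<le> k \<and> m = k - a"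
  unfolding le_fun_def fun_eq_iff by (auto simp: fun_diff_def) (metis le_add1, metis diff_add_inverse)

lemma lookup_weighted_shift:
  "Poly_Mapping.lookup (weighted_shift a \<phi> f) k =
     (if a \<le> k then \<phi> (k - a) * Poly_Mapping.lookup f (k - a) else 0)"
proof -
  have "Poly_Mapping.lookup (weighted_shift a \<phi> f) k =
     (\<Sum>m\<in>Poly_Mapping.keys f. if m = k - a \<and> a \<le> k then \<phi> m * Poly_Mapping.lookup f m else 0)"
    unfolding weighted_shift_def lookup_sum lookup_single when_def
    by (intro sum.cong refl) (auto simp: add_eq_iff_le_diff)
  also have "\<dots> = (if a \<le> k then \<phi> (k - a) * Poly_Mapping.lookup f (k - a) else 0)"
    by (cases "a \<le> k") (auto simp: in_keys_iff)
  finally show ?thesis .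
qed

lemma linear_op_weighted_shift: "linear_op (weighted_shift a \<phi>)"
  by (intro linear_opI poly_mapping_eqI) (simp_all add: lookup_weighted_shift lookup_add algebra_simps)

lemma weighted_shift_comp:
  "weighted_shift b \<psi> (weighted_shift a \<phi> f) = weighted_shift (a + b) (\<lambda>m. \<psi> (a + m) * \<phi> m) f"
proof (rule poly_mapping_eqI)
  fix k
  have "b x \<le> k x \<and> a x \<le> k x - b x \<longleftrightarrow> a x + b x \<le> k x" for x
    by arith
  then have "b \<le> k \<and> a \<le> k - b \<longleftrightarrow> a + b \<le> k"
    by (simp add: le_fun_def fun_diff_def all_conj_distrib[symmetric])
  moreover have "a + b \<le> k \<Longrightarrow> k - b - a = k - (a + b) \<and> a + (k - (a + b)) = k - b"
    by (auto simp: le_fun_def fun_eq_iff fun_diff_def)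
  ultimately show "Poly_Mapping.lookup (weighted_shift b \<psi> (weighted_shift a \<phi> f)) k =
      Poly_Mapping.lookup (weighted_shift (a + b) (\<lambda>m. \<psi> (a + m) * \<phi> m) f) k"
    by (auto simp: lookup_weighted_shift mult.assoc)
qed

lemma lie_weighted_shift:
  "lie (weighted_shift a \<phi>) (weighted_shift b \<psi>) =
     weighted_shift (a + b) (\<lambda>m. \<phi> (b + m) * \<psi> m - \<psi> (a + m) * \<phi> m)"
  unfolding lie_def weighted_shift_comp
  by (intro ext poly_mapping_eqI) (simp add: lookup_weighted_shift lookup_minus left_diff_distrib add.commute)

lemma poly_mapping_sum_singles:
  "h = (\<Sum>m\<in>Poly_Mapping.keys h. Poly_Mapping.single m (Poly_Mapping.lookup h m))"
  by (rule poly_mapping_eqI) (simp add: lookup_sum lookup_single when_def in_keys_iff)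

lemma xmon_mult: "xmon a * h = weighted_shift a (\<lambda>_. 1) h"
  by (subst (1) poly_mapping_sum_singles)
    (simp add: sum_distrib_left xmon_def mult_single weighted_shift_def)

lemma lookup_xvar_mult_pdiff:
  fixes j :: 'n and f :: "('n, 'a::field) kpoly"
  shows "Poly_Mapping.lookup (xvar j * pdiff j f) k = of_nat (k j) * Poly_Mapping.lookup f k"
proof -
  have "xvar j * pdiff j f =
      (\<Sum>m\<in>Poly_Mapping.keys f. Poly_Mapping.single m (of_nat (m j) * Poly_Mapping.lookup f m))"
    unfolding xvar_def xmon_def pdiff_def sum_distrib_left mult_single
  proof (intro sum.cong refl)
    fix m :: "'n \<Rightarrow> nat"
    have "m j \<noteq> 0 \<Longrightarrow> (\<lambda>i. if i = j then 1 else 0) + (\<lambda>i. if i = j then m i - 1 else m i) = m"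
      by (auto simp: fun_eq_iff)
    then show "Poly_Mapping.single ((\<lambda>i. if i = j then 1 else 0) + (\<lambda>i. if i = j then m i - 1 else m i))
        (1 * (of_nat (m j) * Poly_Mapping.lookup f m))
      = Poly_Mapping.single m (of_nat (m j) * Poly_Mapping.lookup f m)"
      by (cases "m j = 0") simp_all
  qed
  then show ?thesis
    by (simp add: lookup_sum lookup_single when_def in_keys_iff)
qed

lemma Delta_eq_weighted_shift: "Delta a \<alpha> = weighted_shift a (pair \<alpha>)"
proof
  fix f
  have "(\<Sum>j\<in>UNIV. pscale (\<alpha> j) (xvar j * pdiff j f)) = weighted_shift 0 (pair \<alpha>) f"
    by (rule poly_mapping_eqI)
      (simp add: lookup_sum lookup_xvar_mult_pdiff lookup_weighted_shift pair_def sum_distrib_right mult.assoc)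
  then show "Delta a \<alpha> f = weighted_shift a (pair \<alpha>) f"
    unfolding Delta_def xmon_mult by (simp add: weighted_shift_comp)
qed

lemma linear_op_Delta: "linear_op (Delta a \<alpha>)"
  unfolding Delta_eq_weighted_shift by (rule linear_op_weighted_shift)

lemma pair_add: "pair \<alpha> (u + v) = pair \<alpha> u + pair \<alpha> v"
  by (simp add: pair_def distrib_left sum.distrib)

lemma pair_scale_diff: "pair (\<lambda>i. s * \<beta> i - t * \<alpha> i) m = s * pair \<beta> m - t * pair \<alpha> m"
  by (simp add: pair_def sum_distrib_left sum_subtractf left_diff_distrib mult.assoc)

lemma pair_add_mult: "pair \<alpha> (\<lambda>i. u i + k * v i) = pair \<alpha> u + of_nat k * pair \<alpha> v"
  by (simp add: pair_def sum.distrib sum_distrib_left algebra_simps)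

lemma lie_Delta:
  "lie (Delta a \<alpha>) (Delta b \<beta>) = Delta (a + b) (\<lambda>i. pair \<alpha> b * \<beta> i - pair \<beta> a * \<alpha> i)"
  unfolding Delta_eq_weighted_shift lie_weighted_shift pair_scale_diff pair_add
  by (simp add: algebra_simps)

lemma Delta_scale: "Delta a (\<lambda>i. c * \<alpha> i) = oscale c (Delta a \<alpha>)"
  unfolding Delta_eq_weighted_shift oscale_def
  by (intro ext poly_mapping_eqI)
    (simp add: lookup_weighted_shift pair_def sum_distrib_left mult.assoc)

lemma Delta_zero: "Delta a (\<lambda>_. 0) = 0"
  using Delta_scale[of a 0 0] by (simp add: oscale_def zero_fun_def)

section \<open>Separating the operators \<open>Delta a \<alpha>\<close>\<close>

definition unit_exp :: "'n \<Rightarrow> 'n \<Rightarrow> nat" where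
  "unit_exp i = (\<lambda>j. if j = i then 1 else 0)"

lemma pair_unit_exp: "pair \<alpha> (unit_exp i) = \<alpha> i"
  by (simp add: pair_def unit_exp_def if_distrib cong: if_cong)

lemma Delta_xvar: "Delta a \<alpha> (xvar i) = Poly_Mapping.single (a + unit_exp i) (\<alpha> i)"
  unfolding Delta_eq_weighted_shift weighted_shift_def xvar_def xmon_def unit_exp_def[symmetric]
  by (simp add: pair_unit_exp)

definition op_coeff :: "'n \<Rightarrow> ('n \<Rightarrow> nat) \<Rightarrow> ('n, 'a::field) kop \<Rightarrow> 'a" where
  "op_coeff i a D = Poly_Mapping.lookup (D (xvar i)) (a + unit_exp i)"

lemma op_coeff_Delta: "op_coeff i a (Delta b \<alpha>) = (if b = a then \<alpha> i else 0)"
  by (simp add: op_coeff_def Delta_xvar lookup_single when_def)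

lemma op_coeff_0 [simp]: "op_coeff i a 0 = 0"
  by (simp add: op_coeff_def)

lemma op_coeff_add [simp]: "op_coeff i a (D + E) = op_coeff i a D + op_coeff i a E"
  by (simp add: op_coeff_def lookup_add)

lemma op_coeff_oscale [simp]: "op_coeff i a (oscale c D) = c * op_coeff i a D"
  by (simp add: op_coeff_def oscale_def)

lemma Delta_mem_span_Deltas:
  assumes "Delta b \<gamma> \<in> ops.span ((\<lambda>a. Delta a \<beta>) ` A)"
  shows "\<exists>c. \<gamma> = (\<lambda>i. c * \<beta> i) \<and> (b \<notin> A \<longrightarrow> c = 0)"
proof -
  define V where "V = {D. \<exists>c. (\<forall>i. op_coeff i b D = c * \<beta> i) \<and> (b \<notin> A \<longrightarrow> c = 0)}"
  have "0 \<in> V"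
    by (auto simp: V_def intro: exI[of _ 0])
  moreover have "D + E \<in> V" if "D \<in> V" "E \<in> V" for D E
  proof -
    from that obtain c d where "\<forall>i. op_coeff i b D = c * \<beta> i" "b \<notin> A \<longrightarrow> c = 0"
      and "\<forall>i. op_coeff i b E = d * \<beta> i" "b \<notin> A \<longrightarrow> d = 0"
      by (auto simp: V_def)
    then show ?thesis
      by (auto simp: V_def distrib_right intro!: exI[of _ "c + d"])
  qed
  moreover have "oscale e D \<in> V" if "D \<in> V" for e D
  proof -
    from that obtain c where "\<forall>i. op_coeff i b D = c * \<beta> i" "b \<notin> A \<longrightarrow> c = 0"
      by (auto simp: V_def)
    then show ?thesis
      by (auto simp: V_def intro!: exI[of _ "e * c"])
  qed
  ultimately have "ops.subspace V"
    by (simp add: ops.subspace_def)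
  moreover have "(\<lambda>a. Delta a \<beta>) ` A \<subseteq> V"
  proof
    fix D assume "D \<in> (\<lambda>a. Delta a \<beta>) ` A"
    then obtain a where "a \<in> A" "D = Delta a \<beta>" by blast
    then show "D \<in> V"
      by (auto simp: V_def op_coeff_Delta intro!: exI[of _ "if a = b then 1 else 0"])
  qed
  ultimately have "Delta b \<gamma> \<in> V"
    using assms ops.span_minimal by blast
  then show ?thesis
    by (auto simp: V_def op_coeff_Delta fun_eq_iff)
qed

lemma Delta_eq_0_iff: "Delta a \<alpha> = 0 \<longleftrightarrow> \<alpha> = 0"
proof
  assume "Delta a \<alpha> = 0"
  then have "\<alpha> i = 0" for i
    using op_coeff_Delta[of i a a \<alpha>] by simp
  then show "\<alpha> = 0" by auto
qed (simp add: Delta_zero zero_fun_def)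

lemma Delta_eq_Delta_iff:
  assumes "\<alpha> \<noteq> 0"
  shows "Delta a \<alpha> = Delta b \<alpha> \<longleftrightarrow> a = b"
proof
  assume "Delta a \<alpha> = Delta b \<alpha>"
  then have "\<alpha> i = (if b = a then \<alpha> i else 0)" for i
    using op_coeff_Delta[of i a] by metis
  moreover obtain i where "\<alpha> i \<noteq> 0"
    using assms by (auto simp: fun_eq_iff)
  ultimately show "a = b" by metis
qed simp

lemma independent_Deltas:
  assumes "\<beta> \<noteq> 0"
  shows "ops.independent ((\<lambda>a. Delta a \<beta>) ` A)"
proof
  assume "ops.dependent ((\<lambda>a. Delta a \<beta>) ` A)"
  then obtain a where "a \<in> A"
    and "Delta a \<beta> \<in> ops.span ((\<lambda>a. Delta a \<beta>) ` A - {Delta a \<beta>})"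
    unfolding ops.dependent_def by blast
  moreover have "(\<lambda>a. Delta a \<beta>) ` A - {Delta a \<beta>} \<subseteq> (\<lambda>a. Delta a \<beta>) ` (A - {a})"
    by blast
  ultimately have "Delta a \<beta> \<in> ops.span ((\<lambda>a. Delta a \<beta>) ` (A - {a}))"
    using ops.span_mono by blast
  then show False
    using Delta_mem_span_Deltas assms by fastforce
qed

section \<open>The Lie algebra generated by \<open>Delta q \<gamma>\<close> and \<open>Delta p \<beta>\<close>\<close>

locale Delta_pair =
  fixes p q :: "'n::finite \<Rightarrow> nat" and \<beta> \<gamma> :: "'n \<Rightarrow> 'a::field" and r :: nat
  assumes q_nonzero: "q \<noteq> 0"
    and beta_nonzero: "\<beta> \<noteq> 0"
    and gamma_not_multiple: "\<forall>c. \<gamma> \<noteq> (\<lambda>i. c * \<beta> i)"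
    and pair_beta_q: "pair \<beta> q = 0"
    and pair_gamma_r: "pair \<gamma> (\<lambda>i. p i + r * q i) = 0"
    and pair_gamma_below_r: "\<forall>k<r. pair \<gamma> (\<lambda>i. p i + k * q i) \<noteq> 0"
begin

abbreviation P :: "nat \<Rightarrow> 'n \<Rightarrow> nat" where
  "P k \<equiv> \<lambda>i. p i + k * q i"

abbreviation Dq :: "('n, 'a) kop" where
  "Dq \<equiv> Delta q \<gamma>"

abbreviation Dp :: "nat \<Rightarrow> ('n, 'a) kop" where
  "Dp k \<equiv> Delta (P k) \<beta>"

abbreviation basis :: "('n, 'a) kop set" where
  "basis \<equiv> insert Dq (Dp ` {0..r})"

abbreviation g :: "('n, 'a) kop set" where
  "g \<equiv> lie_gen {Dq, Delta p \<beta>}"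

lemma lie_Dq_Dp: "lie Dq (Dp k) = oscale (pair \<gamma> (P k)) (Dp (Suc k))"
proof -
  have "q + P k = P (Suc k)" by (simp add: fun_eq_iff)
  then show ?thesis
    by (simp add: lie_Delta pair_beta_q Delta_scale)
qed

lemma lie_Dp_Dp: "lie (Dp j) (Dp k) = 0"
  by (simp add: lie_Delta pair_add_mult pair_beta_q Delta_zero)

lemma Dp_Suc: "k < r \<Longrightarrow> Dp (Suc k) = oscale (1 / pair \<gamma> (P k)) (lie Dq (Dp k))"
  using pair_gamma_below_r by (simp add: lie_Dq_Dp)

lemma lie_Dq_Dp_mem_span:
  assumes "k \<le> r"
  shows "lie Dq (Dp k) \<in> ops.span (Dp ` {Suc k..r})"
proof (cases "k = r")
  case False
  with assms have "Dp (Suc k) \<in> Dp ` {Suc k..r}" by (intro imageI) simp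
  then show ?thesis
    unfolding lie_Dq_Dp by (intro ops.span_scale ops.span_base)
qed (simp add: lie_Dq_Dp pair_gamma_r ops.span_zero)

lemma lie_basis_Dp:
  assumes "x \<in> basis" and "k \<le> r"
  shows "lie x (Dp k) \<in> ops.span (Dp ` {Suc k..r})"
proof (cases "x = Dq")
  case True
  then show ?thesis using lie_Dq_Dp_mem_span[OF \<open>k \<le> r\<close>] by simp
next
  case False
  with assms obtain j where "x = Dp j" by auto
  then show ?thesis by (simp add: lie_Dp_Dp ops.span_zero)
qed

lemma lie_basis_Dq:
  assumes "x \<in> basis"
  shows "lie x Dq \<in> ops.span (Dp ` {1..r})"
proof (cases "x = Dq")
  case True
  then show ?thesis by (simp add: lie_self ops.span_zero)
next
  case False
  with assms obtain j where j: "j \<le> r" "x = Dp j" by auto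
  have "ops.span (Dp ` {Suc j..r}) \<subseteq> ops.span (Dp ` {1..r})"
    by (intro ops.span_mono image_mono) auto
  then have "lie Dq x \<in> ops.span (Dp ` {1..r})"
    using lie_Dq_Dp_mem_span[OF j(1)] j(2) by blast
  then show ?thesis
    by (subst lie_antisym) (rule ops.span_neg)
qed

definition lcs_basis :: "nat \<Rightarrow> ('n, 'a) kop set" where
  "lcs_basis m = (if m = 0 then basis else Dp ` {m..r})"

lemma span_lie_lcs_basis:
  "ops.span {lie x y | x y. x \<in> basis \<and> y \<in> lcs_basis m} = ops.span (lcs_basis (Suc m))"
    (is "ops.span ?L = _")
proof
  have "lie x y \<in> ops.span (Dp ` {Suc m..r})" if x: "x \<in> basis" and y: "y \<in> lcs_basis m" for x y
  proof -
    consider (Dq) "m = 0" "y = Dq" | (Dp) k where "m \<le> k" "k \<le> r" "y = Dp k"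
      using y by (auto simp: lcs_basis_def split: if_splits)
    then show ?thesis
    proof cases
      case Dq
      then show ?thesis using lie_basis_Dq[OF x] by simp
    next
      case Dp
      then have "ops.span (Dp ` {Suc k..r}) \<subseteq> ops.span (Dp ` {Suc m..r})"
        by (intro ops.span_mono image_mono) auto
      then show ?thesis using lie_basis_Dp[OF x] Dp by blast
    qed
  qed
  then have "?L \<subseteq> ops.span (lcs_basis (Suc m))"
    by (auto simp: lcs_basis_def)
  then show "ops.span ?L \<subseteq> ops.span (lcs_basis (Suc m))"
    by (rule ops.span_minimal[OF _ ops.subspace_span])
  have "Dp k \<in> ops.span ?L" if k: "Suc m \<le> k" "k \<le> r" for k
  proof -
    obtain j where j: "k = Suc j" "m \<le> j" "j < r"
      using k by (cases k) auto
    then have "Dp j \<in> lcs_basis m" by (auto simp: lcs_basis_def)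
    then have "lie Dq (Dp j) \<in> ?L" by blast
    then show ?thesis
      unfolding j(1) Dp_Suc[OF \<open>j < r\<close>] by (intro ops.span_scale ops.span_base)
  qed
  then have "lcs_basis (Suc m) \<subseteq> ops.span ?L"
    by (simp add: lcs_basis_def image_subset_iff)
  then show "ops.span (lcs_basis (Suc m)) \<subseteq> ops.span ?L"
    by (rule ops.span_minimal[OF _ ops.subspace_span])
qed

lemma linear_op_basis: "basis \<subseteq> Collect linear_op"
  by (auto simp: linear_op_Delta)

lemma Dp_mem_lie_gen: "k \<le> r \<Longrightarrow> Dp k \<in> g"
proof (induction k)
  case 0
  then show ?case by (simp add: lie_gen.gen)
next
  case (Suc k)
  then have "lie Dq (Dp k) \<in> g"
    by (simp add: lie_gen.bracket lie_gen.gen)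
  then show ?case
    unfolding Dp_Suc[OF Suc_le_lessD[OF Suc.prems]] by (rule lie_gen.scale)
qed

lemma lie_gen_eq_span_basis: "g = ops.span basis"
proof (rule lie_gen_eq_span)
  have "Delta p \<beta> \<in> Dp ` {0..r}"
    by (rule image_eqI[of _ _ 0]) simp_all
  then show "{Dq, Delta p \<beta>} \<subseteq> basis" by blast
  have "Dq \<in> g" by (simp add: lie_gen.gen)
  then show "basis \<subseteq> g"
    using Dp_mem_lie_gen by auto
  show "basis \<subseteq> Collect linear_op"
    by (rule linear_op_basis)
  fix x y assume "x \<in> basis" "y \<in> basis"
  then have "lie x y \<in> ops.span {lie x y | x y. x \<in> basis \<and> y \<in> lcs_basis 0}"
    by (intro ops.span_base) (auto simp: lcs_basis_def)
  also have "\<dots> = ops.span (Dp ` {1..r})"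
    using span_lie_lcs_basis[of 0] by (simp add: lcs_basis_def)
  also have "\<dots> \<subseteq> ops.span basis"
    by (intro ops.span_mono) auto
  finally show "lie x y \<in> ops.span basis" .
qed

lemma lcs_eq_span_lcs_basis: "lcs g m = ops.span (lcs_basis m)"
proof (induction m)
  case 0
  then show ?case by (simp add: lcs_basis_def lie_gen_eq_span_basis)
next
  case (Suc m)
  have "lcs g (Suc m) = ops.span {lie D E | D E. D \<in> g \<and> E \<in> lcs g m}"
    by simp
  also have "\<dots> = ops.span {lie D E | D E. D \<in> ops.span basis \<and> E \<in> ops.span (lcs_basis m)}"
    unfolding Suc.IH unfolding lie_gen_eq_span_basis ..
  also have "\<dots> = ops.span {lie x y | x y. x \<in> basis \<and> y \<in> lcs_basis m}"
    using linear_op_basis by (intro span_lie_span) (auto simp: lcs_basis_def linear_op_Delta)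
  also have "\<dots> = ops.span (lcs_basis (Suc m))"
    by (rule span_lie_lcs_basis)
  finally show ?case .
qed

lemma step_nilpotent_lie_gen: "step_nilpotent g (r + 1)"
proof -
  have "lcs g (r + 1) = {0}"
    using lcs_eq_span_lcs_basis[of "r + 1"] by (simp add: lcs_basis_def)
  moreover have "Dp r \<in> lcs g r"
    by (simp add: lcs_eq_span_lcs_basis lcs_basis_def ops.span_base)
  moreover have "Dp r \<noteq> 0"
    by (simp add: Delta_eq_0_iff beta_nonzero)
  ultimately show ?thesis
    unfolding step_nilpotent_def by auto
qed

lemma Dq_not_in_span_Dp: "Dq \<notin> ops.span (Dp ` {0..r})"
proof
  assume "Dq \<in> ops.span (Dp ` {0..r})"
  then have "Dq \<in> ops.span ((\<lambda>a. Delta a \<beta>) ` P ` {0..r})"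
    by (simp add: image_image)
  from Delta_mem_span_Deltas[OF this] obtain c where "\<gamma> = (\<lambda>i. c * \<beta> i)"
    by blast
  with gamma_not_multiple show False
    by blast
qed

lemma inj_Dp: "inj Dp"
proof
  fix j k assume "Dp j = Dp k"
  then have "P j = P k"
    using Delta_eq_Delta_iff[OF beta_nonzero] by blast
  then have "j * q i = k * q i" for i
    by (metis add_left_cancel)
  moreover obtain i where "q i \<noteq> 0"
    using q_nonzero by (auto simp: fun_eq_iff)
  ultimately show "j = k"
    by (metis mult_right_cancel)
qed

lemma card_basis: "card basis = r + 2"
proof -
  have "Dq \<notin> Dp ` {0..r}"
    using Dq_not_in_span_Dp ops.span_base[of Dq "Dp ` {0..r}"] by blast
  moreover have "card (Dp ` {0..r}) = r + 1"
    using card_image[OF inj_on_subset[OF inj_Dp subset_UNIV]] by simp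
  ultimately show ?thesis
    by simp
qed

lemma independent_basis: "ops.independent basis"
proof (rule ops.independent_insertI[OF Dq_not_in_span_Dp])
  show "ops.independent (Dp ` {0..r})"
    using independent_Deltas[OF beta_nonzero, of "P ` {0..r}"] by (simp add: image_image)
qed

lemma dim_lie_gen: "ops.dim g = r + 2"
  unfolding lie_gen_eq_span_basis ops.dim_span_eq_card_independent[OF independent_basis] card_basis ..

end

theorem proposition2:
  fixes p q :: "'n::finite \<Rightarrow> nat"
    and \<beta> \<gamma> :: "'n \<Rightarrow> 'a::field_char_0"
    and r :: nat
  assumes "p \<noteq> 0" and "q \<noteq> 0"
    and "\<beta> \<noteq> 0" and "\<gamma> \<noteq> 0"
    and "\<forall>c. \<beta> \<noteq> (\<lambda>i. c * \<gamma> i)" and "\<forall>c. \<gamma> \<noteq> (\<lambda>i. c * \<beta> i)"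
    and "pair \<beta> q = 0"
    and "pair \<gamma> (\<lambda>i. p i + r * q i) = 0"
    and "\<forall>k<r. pair \<gamma> (\<lambda>i. p i + k * q i) \<noteq> 0"
  shows "vector_space.dim oscale (lie_gen {Delta q \<gamma>, Delta p \<beta>}) = r + 2
    \<and> step_nilpotent (lie_gen {Delta q \<gamma>, Delta p \<beta>}) (r + 1)
    \<and> (let B = insert (Delta q \<gamma>) ((\<lambda>k. Delta (\<lambda>i. p i + k * q i) \<beta>) ` {0..r}) in
         card B = r + 2 \<and> module.independent oscale B
         \<and> module.span oscale B = lie_gen {Delta q \<gamma>, Delta p \<beta>})"
proof -
  interpret Delta_pair p q \<beta> \<gamma> r
    using assms(2,3,6-9) by unfold_locales
  show ?thesis
    using dim_lie_gen step_nilpotent_lie_gen card_basis independent_basis lie_gen_eq_span_basis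
    by (simp add: Let_def)
qed

end
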